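(* Let $(C,\mathfrak p,\mathfrak d)$ be a regular $q$-magma coalgebra. For all $1\le i\le n-1$ we have $\mathfrak p_{i1}^i=i\,\mathfrak p_{11}^1(\mathfrak p_{10}^1)^{i-1}$ and $\mathfrak d_{i1}^i=i\,\mathfrak d_{11}^1(\mathfrak d_{10}^1)^{i-1}$.
   Context: $K$ is an algebraically closed field of characteristic $0$ and $n\ge2$. $C$ is the coalgebra dual to $K[y]/\langle y^n\rangle$: basis $x_0,\dots,x_{n-1}$, $\Delta(x_i)=\sum_{j+k=i}x_j\otimes x_k$, $\epsilon(x_i)=\delta_{i0}$; $C\otimes C$ has the tensor product coalgebra structure; Sweedler notation $\Delta(b)=b_{(1)}\otimes b_{(2)}$. For linear maps $\mathfrak p,\mathfrak d\colon C\otimes C\to C$ write $a\cdot b=\mathfrak p(a\otimes b)$, $a:b=\mathfrak d(a\otimes b)$, $\mathfrak p(x_i\otimes x_j)=\sum_{k=0}^{n-1}\mathfrak p_{ij}^kx_k$, $\mathfrak d(x_i\otimes x_j)=\sum_{k=0}^{n-1}\mathfrak d_{ij}^kx_k$. A triple $(C,\mathfrak p,\mathfrak d)$ with $\mathfrak p,\mathfrak d$ coalgebra morphisms is a regular $q$-magma coalgebra if there are coalgebra morphisms $a\otimes b\mapsto a^b$, $a\otimes b\mapsto a_b$ from $C\otimes C$ to $C$ with $a^{b_{(1)}}\cdot b_{(2)}=(a\cdot b_{(1)})^{b_{(2)}}=\epsilon(b)a$ and $(a:b_{(2)})_{b_{(1)}}=a_{b_{(2)}}:b_{(1)}=\epsilon(b)a$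 for all $a,b\in C$. *)

theory Defs
  imports "HOL-Computational_Algebra.Polynomial"
begin

text \<open>C has basis x_0..x_{n-1}. A linear map f : C \<otimes> C \<rightarrow> C is given by its
  structure constants: f(x_i \<otimes> x_j) = \<Sum>_{k<n} f i j k x_k (only indices < n matter).\<close>

text \<open>f is a coalgebra morphism C \<otimes> C \<rightarrow> C (tensor product coalgebra on C \<otimes> C):
  counit: eps(f(x_i \<otimes> x_j)) = eps(x_i) eps(x_j);
  comultiplication: Delta(f(x_i \<otimes> x_j)) = (f \<otimes> f)(Delta(x_i \<otimes> x_j)),
  compared coefficientwise at x_s \<otimes> x_t.\<close>
definition coalg_morph :: "nat \<Rightarrow> (nat \<Rightarrow> nat \<Rightarrow> nat \<Rightarrow> 'a::comm_ring_1) \<Rightarrow> bool" where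
  "coalg_morph n f \<longleftrightarrow>
     (\<forall>i<n. \<forall>j<n. f i j 0 = (if i = 0 \<and> j = 0 then 1 else 0)) \<and>
     (\<forall>i<n. \<forall>j<n. \<forall>s<n. \<forall>t<n.
        (if s + t < n then f i j (s + t) else 0) =
        (\<Sum>a\<le>i. \<Sum>c\<le>j. f a c s * f (i - a) (j - c) t))"

text \<open>Regular q-magma coalgebra (C, p, d): p, d coalgebra morphisms and there exist
  coalgebra morphisms U (a \<otimes> b \<mapsto> a^b) and L (a \<otimes> b \<mapsto> a_b) with
  a^{b(1)}.b(2) = (a.b(1))^{b(2)} = eps(b) a and (a:b(2))_{b(1)} = a_{b(2)}:b(1) = eps(b) a,
  checked on basis elements a = x_i, b = x_j, coefficient at x_m
  (Delta x_j = \<Sum>_{u+v=j} x_u \<otimes> x_v).\<close>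
definition regular_q_magma_coalg ::
  "nat \<Rightarrow> (nat \<Rightarrow> nat \<Rightarrow> nat \<Rightarrow> 'a::comm_ring_1) \<Rightarrow> (nat \<Rightarrow> nat \<Rightarrow> nat \<Rightarrow> 'a) \<Rightarrow> bool" where
  "regular_q_magma_coalg n P D \<longleftrightarrow>
     coalg_morph n P \<and> coalg_morph n D \<and>
     (\<exists>U L. coalg_morph n U \<and> coalg_morph n L \<and>
       (\<forall>i<n. \<forall>j<n. \<forall>m<n.
          (\<Sum>u\<le>j. \<Sum>k<n. U i u k * P k (j - u) m) = (if j = 0 \<and> m = i then 1 else 0) \<and>
          (\<Sum>u\<le>j. \<Sum>k<n. P i u k * U k (j - u) m) = (if j = 0 \<and> m = i then 1 else 0) \<and>
          (\<Sum>u\<le>j. \<Sum>k<n. D i (j - u) k * L k u m) = (if j = 0 \<and> m = i then 1 else 0) \<and>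
          (\<Sum>u\<le>j. \<Sum>k<n. L i (j - u) k * D k u m) = (if j = 0 \<and> m = i then 1 else 0)))"

end

theory Submission
  imports Defs
begin

text \<open>Dually, a coalgebra morphism \<open>f : C \<otimes> C \<rightarrow> C\<close> is an algebra map
  \<open>K[y]/(y^n) \<rightarrow> K[y,z]/(y^n, z^n)\<close>, determined by the image \<open>g\<close> of \<open>y\<close>:
  \<open>f i j k\<close> is the coefficient of \<open>y^i z^j\<close> in \<open>g^k\<close>.
  Since \<open>g^n = 0\<close>, \<open>g\<close> has no constant term, so \<open>g^k\<close> starts in degree \<open>k\<close>
  with leading form \<open>(a y + b z)^k\<close>, where \<open>a = f 1 0 1\<close> and \<open>b = f 0 1 1\<close>.
  The coefficient of \<open>y^(n-1) z\<close> in \<open>g^n = 0\<close> is then \<open>n a^(n-1) b\<close>.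
  Regularity makes \<open>a\<close> invertible, hence \<open>b = 0\<close> in characteristic 0, and the
  coefficient of \<open>y^i z\<close> in \<open>g^i\<close> comes only from one factor \<open>f 1 1 1 y z\<close>
  times \<open>i - 1\<close> factors \<open>a y\<close>.\<close>

lemma coalg_morph_counit:
  assumes "coalg_morph n f" "i < n" "j < n"
  shows "f i j 0 = (if i = 0 \<and> j = 0 then 1 else 0)"
  using assms unfolding coalg_morph_def by blast

lemma coalg_morph_comult:
  assumes "coalg_morph n f" "i < n" "j < n" "s < n" "t < n"
  shows "(if s + t < n then f i j (s + t) else 0) =
         (\<Sum>a\<le>i. \<Sum>c\<le>j. f a c s * f (i - a) (j - c) t)"
  using assms unfolding coalg_morph_def by blast

context
  fixes n :: nat and f :: "nat \<Rightarrow> nat \<Rightarrow> nat \<Rightarrow> 'a::idom"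
  assumes cm: "coalg_morph n f" and n_ge_2: "2 \<le> n"
begin

lemma coalg_morph_00_1_eq_0: "f 0 0 1 = 0"
proof -
  have powers: "f 0 0 k = f 0 0 1 ^ k" if "k < n" for k
    using that
  proof (induction k)
    case 0
    then show ?case using coalg_morph_counit[OF cm] by simp
  next
    case (Suc k)
    then show ?case using coalg_morph_comult[OF cm, of 0 0 1 k] n_ge_2 by simp
  qed
  have "f 0 0 1 ^ n = f 0 0 1 * f 0 0 (n - 1)"
    using powers[of "n - 1"] n_ge_2 by (simp add: power_eq_if)
  also have "\<dots> = 0"
    using coalg_morph_comult[OF cm, of 0 0 1 "n - 1"] n_ge_2 by simp
  finally show ?thesis by simp
qed

lemma coalg_morph_eq_0_below_degree:
  assumes "k < n" "i + j < k"
  shows "f i j k = 0"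
  using assms
proof (induction k arbitrary: i j)
  case 0
  then show ?case by simp
next
  case (Suc k)
  show ?case
  proof (cases "k = 0")
    case True
    then show ?thesis using Suc.prems coalg_morph_00_1_eq_0 by simp
  next
    case False
    have "f i j (1 + k) = (\<Sum>a\<le>i. \<Sum>c\<le>j. f a c 1 * f (i - a) (j - c) k)"
      using coalg_morph_comult[OF cm, of i j 1 k] Suc.prems n_ge_2 by simp
    also have "\<dots> = 0"
    proof (intro sum.neutral ballI)
      fix a c assume "a \<in> {..i}" "c \<in> {..j}"
      then show "f a c 1 * f (i - a) (j - c) k = 0"
        using Suc coalg_morph_00_1_eq_0 by (cases "a = 0 \<and> c = 0") auto
    qed
    finally show ?thesis by simp
  qed
qed

lemma coalg_morph_comult_top_degree:
  assumes "t < n" "i + j = Suc t"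
  shows "(\<Sum>a\<le>i. \<Sum>c\<le>j. f a c 1 * f (i - a) (j - c) t) =
         (if 0 < i then f 1 0 1 * f (i - 1) j t else 0) +
         (if 0 < j then f 0 1 1 * f i (j - 1) t else 0)"
proof -
  have "f a c 1 * f (i - a) (j - c) t =
          (if a = 1 then if c = 0 then f 1 0 1 * f (i - 1) j t else 0 else 0) +
          (if a = 0 then if c = 1 then f 0 1 1 * f i (j - 1) t else 0 else 0)"
    if "a \<le> i" "c \<le> j" for a c
  proof -
    consider "a + c = 0" | "a + c = 1" | "2 \<le> a + c" by linarith
    then show ?thesis
    proof cases
      case 1
      then show ?thesis using coalg_morph_00_1_eq_0 by simp
    next
      case 2
      then show ?thesis by (cases a) auto
    next
      case 3
      then show ?thesis
        using coalg_morph_eq_0_below_degree[of t "i - a" "j - c"] assms that by auto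
    qed
  qed
  then show ?thesis
    by (simp add: sum.distrib sum.If_cases)
qed

lemma coalg_morph_top_degree:
  assumes "i + j < n"
  shows "f i j (i + j) = of_nat ((i + j) choose j) * f 1 0 1 ^ i * f 0 1 1 ^ j"
proof -
  have "f i j k = of_nat (k choose j) * f 1 0 1 ^ i * f 0 1 1 ^ j" if "k < n" "i + j = k" for i j k
    using that
  proof (induction k arbitrary: i j)
    case 0
    then show ?case using coalg_morph_counit[OF cm] by simp
  next
    case (Suc t)
    then have rec: "f i j (Suc t) =
        (if 0 < i then f 1 0 1 * f (i - 1) j t else 0) +
        (if 0 < j then f 0 1 1 * f i (j - 1) t else 0)"
      using coalg_morph_comult[OF cm, of i j 1 t] coalg_morph_comult_top_degree[of t i j]
      by simp
    consider "i = 0" | "j = 0" | i' j' where "i = Suc i'" "j = Suc j'"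
      by (meson not0_implies_Suc)
    then show ?case
      using rec Suc by cases (simp_all add: algebra_simps)
  qed
  then show ?thesis using assms by blast
qed

lemma coalg_morph_i1_i:
  assumes b: "f 0 1 1 = 0" and i: "i < n"
  shows "f i 1 i = of_nat i * f 1 1 1 * f 1 0 1 ^ (i - 1)"
  using i
proof (induction i)
  case 0
  then show ?case using coalg_morph_counit[OF cm] n_ge_2 by simp
next
  case (Suc m)
  have summand: "(\<Sum>c\<le>1. f a c 1 * f (Suc m - a) (1 - c) m) =
          (if a = 1 then f 1 0 1 * f m 1 m + f 1 1 1 * f 1 0 1 ^ m else 0)"
    if "a \<le> Suc m" for a
  proof -
    have two_terms: "(\<Sum>c\<le>1. f a c 1 * f (Suc m - a) (1 - c) m) =
          f a 0 1 * f (Suc m - a) 1 m + f a 1 1 * f (Suc m - a) 0 m"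
      by simp
    consider "a = 0" | "a = 1" | "a = 2" | "3 \<le> a"
      by linarith
    then show ?thesis
    proof cases
      case 1
      then show ?thesis using two_terms b coalg_morph_00_1_eq_0 by simp
    next
      case 2
      then show ?thesis using two_terms coalg_morph_top_degree[of m 0] Suc.prems by simp
    next
      case 3
      then show ?thesis
        using two_terms coalg_morph_top_degree[of "m - 1" 1]
          coalg_morph_eq_0_below_degree[of m "m - 1" 0] b Suc.prems that
        by simp
    next
      case 4
      then show ?thesis
        using two_terms coalg_morph_eq_0_below_degree[of m "Suc m - a"] Suc.prems that
        by simp
    qed
  qed
  have "f (Suc m) 1 (1 + m) = (\<Sum>a\<le>Suc m. \<Sum>c\<le>1. f a c 1 * f (Suc m - a) (1 - c) m)"
    using coalg_morph_comult[OF cm, of "Suc m" 1 1 m] Suc.prems n_ge_2 by simp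
  also have "\<dots> =
      (\<Sum>a\<le>Suc m. if a = 1 then f 1 0 1 * f m 1 m + f 1 1 1 * f 1 0 1 ^ m else 0)"
    by (intro sum.cong refl summand) simp
  also have "\<dots> = f 1 0 1 * f m 1 m + f 1 1 1 * f 1 0 1 ^ m"
    by (simp del: sum.atMost_Suc)
  finally show ?case
    using Suc by (cases m) (auto simp: algebra_simps)
qed

lemma coalg_morph_10_eq_0:
  assumes "k < n" "k \<noteq> 1"
  shows "f 1 0 k = 0"
  using coalg_morph_counit[OF cm, of 1 0] coalg_morph_eq_0_below_degree[of k 1 0] assms n_ge_2
  by (cases "k = 0") auto

lemma sum_coalg_morph_10: "(\<Sum>k<n. f 1 0 k * g k) = f 1 0 1 * g 1"
proof -
  have "(\<Sum>k<n. f 1 0 k * g k) = (\<Sum>k\<in>{1}. f 1 0 k * g k)"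
    using n_ge_2 coalg_morph_10_eq_0 by (intro sum.mono_neutral_right) auto
  then show ?thesis
    by simp
qed

end

lemma coalg_morph_01_1_eq_0:
  fixes f :: "nat \<Rightarrow> nat \<Rightarrow> nat \<Rightarrow> 'a::{idom, ring_char_0}"
  assumes cm: "coalg_morph n f" and n: "2 \<le> n" and "f 1 0 1 \<noteq> 0"
  shows "f 0 1 1 = 0"
proof -
  obtain k where k: "n = Suc (Suc k)"
    using n by (metis add_2_eq_Suc le_Suc_ex)
  have "0 = (\<Sum>a\<le>Suc k. \<Sum>c\<le>1. f a c 1 * f (Suc k - a) (1 - c) (Suc k))"
    using coalg_morph_comult[OF cm, of "Suc k" 1 1 "Suc k"] k by simp
  also have "\<dots> = f 1 0 1 * f k 1 (Suc k) + f 0 1 1 * f (Suc k) 0 (Suc k)"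
    using coalg_morph_comult_top_degree[OF cm n, of "Suc k" "Suc k" 1] k by simp
  also have "\<dots> = of_nat n * f 1 0 1 ^ Suc k * f 0 1 1"
    using coalg_morph_top_degree[OF cm n, of k 1] coalg_morph_top_degree[OF cm n, of "Suc k" 0] k
    by (simp add: algebra_simps)
  finally show ?thesis
    using assms n by simp
qed

lemma regular_q_magma_coalg_10_1_nonzero:
  fixes P D :: "nat \<Rightarrow> nat \<Rightarrow> nat \<Rightarrow> 'a::idom"
  assumes n: "2 \<le> n" and "regular_q_magma_coalg n P D"
  shows "P 1 0 1 \<noteq> 0" "D 1 0 1 \<noteq> 0"
proof -
  obtain U L where U_morph: "coalg_morph n U" and D_morph: "coalg_morph n D"
    and inv: "\<And>i j m. i < n \<Longrightarrow> j < n \<Longrightarrow> m < n \<Longrightarrow>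
          (\<Sum>u\<le>j. \<Sum>k<n. U i u k * P k (j - u) m) = (if j = 0 \<and> m = i then 1 else 0) \<and>
          (\<Sum>u\<le>j. \<Sum>k<n. D i (j - u) k * L k u m) = (if j = 0 \<and> m = i then 1 else 0)"
    using assms(2) unfolding regular_q_magma_coalg_def by blast
  have "U 1 0 1 * P 1 0 1 = 1" "D 1 0 1 * L 1 0 1 = 1"
    using inv[of 1 0 1] n sum_coalg_morph_10[OF U_morph n] sum_coalg_morph_10[OF D_morph n] by simp_all
  then show "P 1 0 1 \<noteq> 0" "D 1 0 1 \<noteq> 0"
    by auto
qed

theorem proposition1p15:
  fixes n :: nat
    and P D :: "nat \<Rightarrow> nat \<Rightarrow> nat \<Rightarrow> 'a :: {alg_closed_field, field_char_0}"
  assumes "n \<ge> 2"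
    and "regular_q_magma_coalg n P D"
  shows "\<forall>i. 1 \<le> i \<and> i \<le> n - 1 \<longrightarrow>
           P i 1 i = of_nat i * P 1 1 1 * (P 1 0 1) ^ (i - 1) \<and>
           D i 1 i = of_nat i * D 1 1 1 * (D 1 0 1) ^ (i - 1)"
proof -
  have P_morph: "coalg_morph n P" and D_morph: "coalg_morph n D"
    using assms(2) unfolding regular_q_magma_coalg_def by blast+
  have "P 0 1 1 = 0" "D 0 1 1 = 0"
    using coalg_morph_01_1_eq_0[OF P_morph assms(1)] coalg_morph_01_1_eq_0[OF D_morph assms(1)]
      regular_q_magma_coalg_10_1_nonzero[OF assms] by blast+
  moreover have "i < n" if "i \<le> n - 1" for i
    using that assms(1) by linarith
  ultimately show ?thesis
    using coalg_morph_i1_i[OF P_morph assms(1)] coalg_morph_i1_i[OF D_morph assms(1)] by blast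
qed

end
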